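(* Let $G$ be a finite connected graph and let $B\subseteq V(G)$ be a separator (i.e. $G-B$ is disconnected) such that the induced subgraph $G[B]$ has diameter $k$. Let $C_1,\dots,C_m$ be the connected components of $G-B$ and let $G_i=G[V(C_i)\cup B]$. Let $\hat\delta_i$ be the four-points hyperbolic curvature of $G_i$. Then the four-points hyperbolic curvature of $G$ is at most $k+\max_i\hat\delta_i$.
   Context: For a connected graph $H$ with graph distance $d$, the four-points hyperbolic curvature of $H$ is the smallest $\hat\delta\ge0$ such that for all vertices $a,b,c,d'$ of $H$, $d(a,b)+d(c,d')\le\max\{d(a,c)+d(b,d'),\ d(a,d')+d(b,c)\}+2\hat\delta$. Each $G_i$ is considered with its own graph distance. *)

theory Defs
  imports Complex_Main
begin

text \<open>Simple graphs are given by a vertex set V and a symmetric irreflexive edge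
relation E. Induced subgraphs G[S] are represented by restricting walks to S.\<close>

definition walk_in :: "'a set \<Rightarrow> ('a \<Rightarrow> 'a \<Rightarrow> bool) \<Rightarrow> 'a list \<Rightarrow> bool" where
  "walk_in S E xs \<longleftrightarrow> xs \<noteq> [] \<and> set xs \<subseteq> S \<and>
     (\<forall>i. Suc i < length xs \<longrightarrow> E (xs ! i) (xs ! Suc i))"

definition reachable_in :: "'a set \<Rightarrow> ('a \<Rightarrow> 'a \<Rightarrow> bool) \<Rightarrow> 'a \<Rightarrow> 'a \<Rightarrow> bool" where
  "reachable_in S E u v \<longleftrightarrow> (\<exists>xs. walk_in S E xs \<and> hd xs = u \<and> last xs = v)"

definition connected_in :: "'a set \<Rightarrow> ('a \<Rightarrow> 'a \<Rightarrow> bool) \<Rightarrow> bool" where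
  "connected_in S E \<longleftrightarrow> S \<noteq> {} \<and> (\<forall>u\<in>S. \<forall>v\<in>S. reachable_in S E u v)"

definition gdist :: "'a set \<Rightarrow> ('a \<Rightarrow> 'a \<Rightarrow> bool) \<Rightarrow> 'a \<Rightarrow> 'a \<Rightarrow> nat" where
  "gdist S E u v = (LEAST n. \<exists>xs. walk_in S E xs \<and> hd xs = u \<and> last xs = v \<and> length xs = Suc n)"

definition diameter :: "'a set \<Rightarrow> ('a \<Rightarrow> 'a \<Rightarrow> bool) \<Rightarrow> nat" where
  "diameter S E = Max {gdist S E u v | u v. u \<in> S \<and> v \<in> S}"

definition component_of :: "'a set \<Rightarrow> ('a \<Rightarrow> 'a \<Rightarrow> bool) \<Rightarrow> 'a set \<Rightarrow> bool" where
  "component_of S E C \<longleftrightarrow> C \<subseteq> S \<and> connected_in C E \<and>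
     (\<forall>u\<in>C. \<forall>v\<in>S. reachable_in S E u v \<longrightarrow> v \<in> C)"

definition four_point_cond :: "'a set \<Rightarrow> ('a \<Rightarrow> 'a \<Rightarrow> bool) \<Rightarrow> real \<Rightarrow> bool" where
  "four_point_cond S E \<delta> \<longleftrightarrow> 0 \<le> \<delta> \<and> (\<forall>a\<in>S. \<forall>b\<in>S. \<forall>c\<in>S. \<forall>d\<in>S.
     real (gdist S E a b) + real (gdist S E c d)
       \<le> max (real (gdist S E a c) + real (gdist S E b d))
              (real (gdist S E a d) + real (gdist S E b c)) + 2 * \<delta>)"

definition hyp_curv :: "'a set \<Rightarrow> ('a \<Rightarrow> 'a \<Rightarrow> bool) \<Rightarrow> real" where
  "hyp_curv S E = (LEAST \<delta>. four_point_cond S E \<delta>)"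

end

theory Submission
  imports Defs
begin

text \<open>Let \<open>r x\<close> be the distance in \<open>G\<close> from \<open>x\<close> to \<open>B\<close>. Passing through \<open>B\<close> gives
  \<open>d x y \<le> r x + r y + k\<close> for all vertices, while \<open>r x + r y \<le> d x y\<close> when \<open>x\<close> and \<open>y\<close> are not
  joined in \<open>G - B\<close>. Distances in \<open>G\<^sub>i = G[C \<union> B]\<close> exceed those of \<open>G\<close> by at most \<open>k\<close>, and
  coincide with them unless a shortest path of \<open>G\<close> between the two vertices meets \<open>B\<close>. So a
  quadruple inside one \<open>G\<^sub>i\<close> satisfies the four-point condition of \<open>G\<close> with \<open>2k\<close> added. For any
  other quadruple \<open>a, b, c, e\<close>, either one of the pairings \<open>{ac, be}\<close>, \<open>{ae, bc}\<close> consists of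
  separated pairs, so its distance sum is at least \<open>r a + r b + r c + r e \<ge> d a b + d c e - 2k\<close>;
  or three of the points lie in one \<open>C \<union> B\<close> and the fourth outside it, and then the four-point
  condition of \<open>G\<^sub>i\<close> applied to the three points and a vertex of \<open>B\<close> gives the bound.\<close>

lemma walk_in_singleton: "x \<in> S \<Longrightarrow> walk_in S E [x]"
  by (simp add: walk_in_def)

lemma walk_in_mono: "walk_in S E xs \<Longrightarrow> set xs \<subseteq> T \<Longrightarrow> walk_in T E xs"
  by (simp add: walk_in_def)

lemma walk_in_drop: "walk_in S E xs \<Longrightarrow> j < length xs \<Longrightarrow> walk_in S E (drop j xs)"
  by (auto simp: walk_in_def dest: in_set_dropD)

lemma nth_append_last:
  "xs \<noteq> [] \<Longrightarrow> length xs - 1 \<le> i \<Longrightarrow> (xs @ zs) ! i = (last xs # zs) ! (i - (length xs - 1))"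
  by (cases "i = length xs - 1") (auto simp: nth_append last_conv_nth nth_Cons')

lemma walk_in_append:
  assumes "walk_in S E xs" "walk_in S E ys" "last xs = hd ys"
  shows "walk_in S E (xs @ tl ys)"
proof -
  have ne: "xs \<noteq> []" "ys \<noteq> []" using assms by (auto simp: walk_in_def)
  then have ys: "ys = last xs # tl ys" using assms(3) by simp
  have "E ((xs @ tl ys) ! i) ((xs @ tl ys) ! Suc i)" if "Suc i < length (xs @ tl ys)" for i
  proof (cases "Suc i < length xs")
    case True
    then show ?thesis using assms(1) by (simp add: nth_append walk_in_def)
  next
    case False
    let ?m = "i - (length xs - 1)"
    have "(xs @ tl ys) ! i = ys ! ?m" "(xs @ tl ys) ! Suc i = ys ! Suc ?m"
      using False ne nth_append_last[of xs _ "tl ys"] by (simp_all add: Suc_diff_le flip: ys)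
    moreover have "Suc ?m < length ys" using that False ne by (subst ys) simp
    ultimately show ?thesis using assms(2) by (simp add: walk_in_def)
  qed
  then show ?thesis using assms ne by (auto simp: walk_in_def dest: list.set_sel(2))
qed

lemma walk_in_rev:
  assumes "walk_in S E xs" "\<And>u v. E u v \<Longrightarrow> E v u"
  shows "walk_in S E (rev xs)"
proof -
  have "E (rev xs ! i) (rev xs ! Suc i)" if "Suc i < length xs" for i
  proof -
    let ?j = "length xs - Suc (Suc i)"
    have "E (xs ! ?j) (xs ! Suc ?j)" using assms(1) that by (simp add: walk_in_def)
    moreover have "Suc ?j = length xs - Suc i" using that by simp
    ultimately show ?thesis using assms(2) that by (simp add: rev_nth)
  qed
  then show ?thesis using assms(1) by (auto simp: walk_in_def)
qed

lemma reachable_in_walk: "walk_in S E xs \<Longrightarrow> reachable_in S E (hd xs) (last xs)"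
  by (auto simp: reachable_in_def)

lemma reachable_in_refl: "u \<in> S \<Longrightarrow> reachable_in S E u u"
  using walk_in_singleton[of u S E] by (auto simp: reachable_in_def)

lemma reachable_in_edge: "u \<in> S \<Longrightarrow> v \<in> S \<Longrightarrow> E u v \<Longrightarrow> reachable_in S E u v"
  unfolding reachable_in_def walk_in_def by (intro exI[of _ "[u, v]"]) auto

lemma reachable_in_trans:
  "reachable_in S E u v \<Longrightarrow> reachable_in S E v w \<Longrightarrow> reachable_in S E u w"
proof -
  assume "reachable_in S E u v" "reachable_in S E v w"
  then obtain xs ys where xs: "walk_in S E xs" "hd xs = u" "last xs = v"
    and ys: "walk_in S E ys" "hd ys = v" "last ys = w"
    by (auto simp: reachable_in_def)
  then have "xs \<noteq> []" "ys \<noteq> []" by (auto simp: walk_in_def)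
  then have "hd (xs @ tl ys) = u" "last (xs @ tl ys) = w"
    using xs ys by (cases ys; auto)+
  then show ?thesis using walk_in_append[OF xs(1) ys(1)] xs ys unfolding reachable_in_def by metis
qed

lemma reachable_in_sym:
  "(\<And>u v. E u v \<Longrightarrow> E v u) \<Longrightarrow> reachable_in S E u v \<Longrightarrow> reachable_in S E v u"
  unfolding reachable_in_def by (metis walk_in_rev hd_rev last_rev)

lemma reachable_in_mono: "reachable_in S E u v \<Longrightarrow> S \<subseteq> T \<Longrightarrow> reachable_in T E u v"
  unfolding reachable_in_def walk_in_def by blast

lemma reachable_in_memD: "reachable_in S E u v \<Longrightarrow> u \<in> S \<and> v \<in> S"
  unfolding reachable_in_def walk_in_def by (metis hd_in_set last_in_set subsetD)

lemma gdist_le_walk: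
  assumes "walk_in S E xs" "hd xs = u" "last xs = v"
  shows "gdist S E u v \<le> length xs - 1"
proof -
  have "length xs = Suc (length xs - 1)" using assms(1) by (simp add: walk_in_def)
  then show ?thesis unfolding gdist_def using assms by (intro Least_le) blast
qed

lemma gdist_shortest_walk:
  assumes "reachable_in S E u v"
  obtains xs where "walk_in S E xs" "hd xs = u" "last xs = v" "length xs = Suc (gdist S E u v)"
proof -
  obtain xs where xs: "walk_in S E xs" "hd xs = u" "last xs = v"
    using assms by (auto simp: reachable_in_def)
  then have "length xs = Suc (length xs - 1)" by (simp add: walk_in_def)
  then have "\<exists>n xs. walk_in S E xs \<and> hd xs = u \<and> last xs = v \<and> length xs = Suc n"
    using xs by blast
  then have "\<exists>xs. walk_in S E xs \<and> hd xs = u \<and> last xs = v \<and> length xs = Suc (gdist S E u v)"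
    unfolding gdist_def by (rule LeastI_ex)
  then show ?thesis using that by blast
qed

lemma walk_in_take_hd_last:
  assumes "walk_in S E xs" "i < length xs"
  shows "walk_in S E (take (Suc i) xs)" "hd (take (Suc i) xs) = hd xs"
    "last (take (Suc i) xs) = xs ! i" "length (take (Suc i) xs) = Suc i"
proof -
  show "walk_in S E (take (Suc i) xs)" using assms by (auto simp: walk_in_def dest: in_set_takeD)
  show "hd (take (Suc i) xs) = hd xs" by (cases xs) auto
  show "last (take (Suc i) xs) = xs ! i" "length (take (Suc i) xs) = Suc i"
    using assms(2) by (simp_all add: take_Suc_conv_app_nth)
qed

lemma reachable_in_hd_nth: "walk_in S E xs \<Longrightarrow> i < length xs \<Longrightarrow> reachable_in S E (hd xs) (xs ! i)"
  by (metis walk_in_take_hd_last reachable_in_walk)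

lemma gdist_hd_nth_le:
  assumes "walk_in S E xs" "i < length xs"
  shows "gdist S E (hd xs) (xs ! i) \<le> i"
  using gdist_le_walk[OF walk_in_take_hd_last(1-3)[OF assms]] walk_in_take_hd_last(4)[OF assms] by simp

lemma gdist_nth_last_le:
  assumes "walk_in S E xs" "i < length xs"
  shows "gdist S E (xs ! i) (last xs) \<le> length xs - Suc i"
  using gdist_le_walk[OF walk_in_drop[OF assms]] assms(2) by (simp add: hd_drop_conv_nth)

lemma gdist_self: "u \<in> S \<Longrightarrow> gdist S E u u = 0"
  using gdist_le_walk[OF walk_in_singleton[of u S E]] by simp

lemma gdist_triangle:
  assumes "reachable_in S E u v" "reachable_in S E v w"
  shows "gdist S E u w \<le> gdist S E u v + gdist S E v w"
proof -
  obtain xs where xs: "walk_in S E xs" "hd xs = u" "last xs = v" "length xs = Suc (gdist S E u v)"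
    using assms(1) by (rule gdist_shortest_walk)
  obtain ys where ys: "walk_in S E ys" "hd ys = v" "last ys = w" "length ys = Suc (gdist S E v w)"
    using assms(2) by (rule gdist_shortest_walk)
  have "hd (xs @ tl ys) = u" "last (xs @ tl ys) = w"
    using xs ys by (cases xs; cases ys; auto)+
  then show ?thesis
    using gdist_le_walk[OF walk_in_append[OF xs(1) ys(1)]] xs ys by simp
qed

text \<open>Both sides are \<open>LEAST n. False\<close> when \<open>u\<close> and \<open>v\<close> are not connected in \<open>S\<close>.\<close>
lemma gdist_commute:
  assumes "\<And>u v. E u v \<Longrightarrow> E v u"
  shows "gdist S E u v = gdist S E v u"
proof -
  have "\<exists>ys. walk_in S E ys \<and> hd ys = v \<and> last ys = u \<and> length ys = n"
    if "walk_in S E xs" "hd xs = u" "last xs = v" "length xs = n" for u v n xs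
    using that walk_in_rev[OF that(1) assms]
    by (intro exI[of _ "rev xs"]) (auto simp: walk_in_def hd_rev last_rev)
  then have "(\<exists>xs. walk_in S E xs \<and> hd xs = u \<and> last xs = v \<and> length xs = n)
    \<longleftrightarrow> (\<exists>xs. walk_in S E xs \<and> hd xs = v \<and> last xs = u \<and> length xs = n)" for n
    by blast
  then show ?thesis unfolding gdist_def by simp
qed

lemma gdist_antimono:
  assumes "reachable_in S E u v" "S \<subseteq> T"
  shows "gdist T E u v \<le> gdist S E u v"
proof -
  obtain xs where "walk_in S E xs" "hd xs = u" "last xs = v" "length xs = Suc (gdist S E u v)"
    using assms(1) by (rule gdist_shortest_walk)
  moreover from this have "walk_in T E xs" using assms(2) by (auto simp: walk_in_def)
  ultimately show ?thesis using gdist_le_walk[of T E xs u v] by simp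
qed

lemma gdist_le_diameter:
  assumes "finite S" "u \<in> S" "v \<in> S"
  shows "gdist S E u v \<le> diameter S E"
proof -
  have "{gdist S E u v | u v. u \<in> S \<and> v \<in> S} = (\<lambda>(u, v). gdist S E u v) ` (S \<times> S)"
    by auto
  then show ?thesis unfolding diameter_def using assms by (auto intro: Max_ge)
qed

definition four_point_ineq :: "('a \<Rightarrow> 'a \<Rightarrow> nat) \<Rightarrow> real \<Rightarrow> 'a \<Rightarrow> 'a \<Rightarrow> 'a \<Rightarrow> 'a \<Rightarrow> bool" where
  "four_point_ineq D \<delta> a b c e \<longleftrightarrow> real (D a b) + real (D c e)
     \<le> max (real (D a c) + real (D b e)) (real (D a e) + real (D b c)) + 2 * \<delta>"

lemma four_point_cond_iff:
  "four_point_cond S E \<delta> \<longleftrightarrow>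
     0 \<le> \<delta> \<and> (\<forall>a\<in>S. \<forall>b\<in>S. \<forall>c\<in>S. \<forall>e\<in>S. four_point_ineq (gdist S E) \<delta> a b c e)"
  by (simp add: four_point_cond_def four_point_ineq_def)

lemma four_point_ineq_swap_pairs:
  "(\<And>u v. D u v = D v u) \<Longrightarrow> four_point_ineq D \<delta> c e a b \<Longrightarrow> four_point_ineq D \<delta> a b c e"
  unfolding four_point_ineq_def by (smt (verit))

lemma four_point_ineq_swap_right:
  "(\<And>u v. D u v = D v u) \<Longrightarrow> four_point_ineq D \<delta> a b e c \<Longrightarrow> four_point_ineq D \<delta> a b c e"
  unfolding four_point_ineq_def by (smt (verit))

lemma four_point_cond_iff_hyp_curv_le:
  assumes "finite S"
  shows "four_point_cond S E \<delta> \<longleftrightarrow> hyp_curv S E \<le> \<delta>"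
proof -
  define excess where "excess = (\<lambda>(a, b, c, e). (real (gdist S E a b) + real (gdist S E c e)
      - max (real (gdist S E a c) + real (gdist S E b e)) (real (gdist S E a e) + real (gdist S E b c))) / 2)"
  define X where "X = insert 0 (excess ` (S \<times> S \<times> S \<times> S))"
  have "finite X" using assms by (simp add: X_def)
  have "four_point_cond S E \<delta> \<longleftrightarrow> (\<forall>x\<in>X. x \<le> \<delta>)" for \<delta>
    unfolding four_point_cond_def X_def excess_def by (auto simp: field_simps)
  also have "\<dots> \<delta> \<longleftrightarrow> Max X \<le> \<delta>" for \<delta>
    using \<open>finite X\<close> by (simp add: X_def Max_le_iff)
  finally have threshold: "four_point_cond S E \<delta> \<longleftrightarrow> Max X \<le> \<delta>" for \<delta> .
  then have "hyp_curv S E = Max X"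
    unfolding hyp_curv_def by (intro Least_equality) auto
  then show ?thesis using threshold by simp
qed

locale graph_separator =
  fixes V B :: "'a set" and E :: "'a \<Rightarrow> 'a \<Rightarrow> bool" and k :: nat
  assumes finite_V: "finite V"
    and sym_E: "\<And>u v. E u v \<Longrightarrow> E v u"
    and connected_V: "connected_in V E"
    and B_subset: "B \<subseteq> V"
    and connected_B: "connected_in B E"
    and gdist_B_le: "\<And>p q. p \<in> B \<Longrightarrow> q \<in> B \<Longrightarrow> gdist B E p q \<le> k"
begin

abbreviation d :: "'a \<Rightarrow> 'a \<Rightarrow> nat" where
  "d \<equiv> gdist V E"

definition dist_B :: "'a \<Rightarrow> nat" where
  "dist_B x = Min (d x ` B)"

abbreviation component :: "'a set \<Rightarrow> bool" where
  "component C \<equiv> component_of (V - B) E C"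

definition component_at :: "'a \<Rightarrow> 'a set" where
  "component_at x = {y. reachable_in (V - B) E x y}"

lemma reachable_V: "x \<in> V \<Longrightarrow> y \<in> V \<Longrightarrow> reachable_in V E x y"
  using connected_V by (simp add: connected_in_def)

lemma reachable_B: "p \<in> B \<Longrightarrow> q \<in> B \<Longrightarrow> reachable_in B E p q"
  using connected_B by (simp add: connected_in_def)

lemma reachable_in_commute: "reachable_in S E u v \<Longrightarrow> reachable_in S E v u"
  using sym_E by (rule reachable_in_sym)

lemma d_commute: "d x y = d y x"
  using gdist_commute[OF sym_E] .

lemma dist_B_le: "p \<in> B \<Longrightarrow> dist_B x \<le> d x p"
  unfolding dist_B_def using finite_subset[OF B_subset finite_V] by simp

lemma dist_B_attained:
  obtains p where "p \<in> B" "d x p = dist_B x"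
proof -
  have "B \<noteq> {}" using connected_B by (simp add: connected_in_def)
  then have "dist_B x \<in> d x ` B"
    unfolding dist_B_def using finite_subset[OF B_subset finite_V] by (intro Min_in) auto
  then show ?thesis using that by auto
qed

lemma dist_B_zero: "p \<in> B \<Longrightarrow> dist_B p = 0"
  using dist_B_le[of p p] gdist_self[of p V E] B_subset by auto

lemma gdist_via_B:
  assumes "B \<subseteq> S" "reachable_in S E x p" "reachable_in S E y q" "p \<in> B" "q \<in> B"
  shows "reachable_in S E x y" and "gdist S E x y \<le> gdist S E x p + gdist S E y q + k"
proof -
  have pq: "reachable_in S E p q" using reachable_B[OF assms(4,5)] assms(1) by (rule reachable_in_mono)
  have qy: "reachable_in S E q y" using assms(3) by (rule reachable_in_commute)
  have py: "reachable_in S E p y" using pq qy by (rule reachable_in_trans)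
  show "reachable_in S E x y" using assms(2) py by (rule reachable_in_trans)
  have "gdist S E x y \<le> gdist S E x p + gdist S E p y"
    using assms(2) py by (rule gdist_triangle)
  also have "gdist S E p y \<le> gdist S E p q + gdist S E q y"
    using pq qy by (rule gdist_triangle)
  also have "gdist S E p q \<le> k"
    using gdist_antimono[OF reachable_B[OF assms(4,5)] assms(1)] gdist_B_le[OF assms(4,5)] by simp
  also have "gdist S E q y = gdist S E y q" using gdist_commute[OF sym_E] .
  finally show "gdist S E x y \<le> gdist S E x p + gdist S E y q + k" by simp
qed

lemma d_le_dist_B: "x \<in> V \<Longrightarrow> y \<in> V \<Longrightarrow> d x y \<le> dist_B x + dist_B y + k"
  by (metis dist_B_attained gdist_via_B(2) B_subset reachable_V subsetD)

lemma shortest_walk_meets_B_or_avoids_B: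
  assumes "x \<in> V" "y \<in> V"
  shows "dist_B x + dist_B y \<le> d x y \<or>
    (\<exists>xs. walk_in (V - B) E xs \<and> hd xs = x \<and> last xs = y \<and> length xs = Suc (d x y))"
proof -
  obtain xs where xs: "walk_in V E xs" "hd xs = x" "last xs = y" "length xs = Suc (d x y)"
    using reachable_V[OF assms] by (rule gdist_shortest_walk)
  show ?thesis
  proof (cases "\<exists>i<length xs. xs ! i \<in> B")
    case True
    then obtain i where i: "i < length xs" "xs ! i \<in> B" by blast
    have "dist_B x \<le> i"
      using dist_B_le[OF i(2), of x] gdist_hd_nth_le[OF xs(1) i(1)] xs(2) by simp
    moreover have "dist_B y \<le> length xs - Suc i"
      using dist_B_le[OF i(2), of y] gdist_nth_last_le[OF xs(1) i(1)] xs(3) d_commute by simp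
    ultimately show ?thesis using i(1) xs(4) by linarith
  next
    case False
    then have "walk_in (V - B) E xs" using xs(1) by (auto simp: walk_in_def in_set_conv_nth)
    then show ?thesis using xs by blast
  qed
qed

lemma dist_B_add_le_if_not_reachable:
  "x \<in> V \<Longrightarrow> y \<in> V \<Longrightarrow> \<not> reachable_in (V - B) E x y \<Longrightarrow> dist_B x + dist_B y \<le> d x y"
  using shortest_walk_meets_B_or_avoids_B reachable_in_walk by metis

lemma component_reachable_closed:
  assumes "component C" "u \<in> C" "reachable_in (V - B) E u v"
  shows "v \<in> C"
proof -
  have "v \<in> V - B" using reachable_in_memD[OF assms(3)] ..
  then show ?thesis using assms unfolding component_of_def by blast
qed

lemma component_edge_closed:
  assumes "component C" "u \<in> C" "v \<in> V - B" "E u v"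
  shows "v \<in> C"
proof -
  have "u \<in> V - B" using assms(1,2) by (auto simp: component_of_def)
  from reachable_in_edge[of u "V - B" v E, OF this assms(3,4)] show ?thesis
    by (rule component_reachable_closed[OF assms(1,2)])
qed

lemma not_reachable_outside_component:
  assumes "component C" "t \<in> C \<union> B" "w \<notin> C \<union> B"
  shows "\<not> reachable_in (V - B) E t w"
proof
  assume reach: "reachable_in (V - B) E t w"
  then have "t \<in> C" using assms(2) reachable_in_memD[OF reach] by blast
  then have "w \<in> C" using reach by (rule component_reachable_closed[OF assms(1)])
  then show False using assms(3) by blast
qed

lemma walk_stays_in_component:
  assumes C: "component C" and xs: "walk_in V E xs" "hd xs \<in> C"
    and avoids_B: "\<And>i. Suc i < length xs \<Longrightarrow> xs ! i \<notin> B"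
  shows "set xs \<subseteq> C \<union> B"
proof -
  have "xs ! i \<in> C \<union> B" if "i < length xs" for i
    using that
  proof (induction i)
    case 0
    then show ?case using xs(2) by (simp add: hd_conv_nth)
  next
    case (Suc i)
    then have "xs ! i \<in> C" using avoids_B by auto
    moreover have "E (xs ! i) (xs ! Suc i)" "xs ! Suc i \<in> V"
      using xs(1) Suc.prems by (auto simp: walk_in_def)
    ultimately show ?case using component_edge_closed[OF C] by blast
  qed
  then show ?thesis unfolding subset_iff in_set_conv_nth by blast
qed

lemma component_component_at:
  assumes "x \<in> V - B"
  shows "component (component_at x)"
proof -
  have closed: "v \<in> component_at x"
    if "u \<in> component_at x" "reachable_in (V - B) E u v" for u v
    using that reachable_in_trans by (auto simp: component_at_def)
  have "reachable_in (component_at x) E u v"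
    if "u \<in> component_at x" "v \<in> component_at x" for u v
  proof -
    have "reachable_in (V - B) E x u" "reachable_in (V - B) E x v"
      using that by (auto simp: component_at_def)
    then have "reachable_in (V - B) E u v"
      by (metis reachable_in_commute reachable_in_trans)
    then obtain ws where ws: "walk_in (V - B) E ws" "hd ws = u" "last ws = v"
      by (auto simp: reachable_in_def)
    have "ws ! i \<in> component_at x" if "i < length ws" for i
      using closed[OF \<open>u \<in> component_at x\<close>] reachable_in_hd_nth[OF ws(1) that] ws(2) by blast
    then have "walk_in (component_at x) E ws" using ws(1) by (auto simp: walk_in_def in_set_conv_nth)
    then show ?thesis using ws reachable_in_walk by blast
  qed
  moreover have "x \<in> component_at x" using reachable_in_refl[OF assms] by (simp add: component_at_def)
  moreover have "component_at x \<subseteq> V - B" by (auto simp: component_at_def dest: reachable_in_memD)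
  ultimately show ?thesis unfolding component_of_def connected_in_def using closed by fast
qed

lemma nearest_B_within_component:
  assumes C: "component C" and x: "x \<in> C \<union> B"
  obtains p where "p \<in> B" "reachable_in (C \<union> B) E x p" "gdist (C \<union> B) E x p \<le> dist_B x"
proof (cases "x \<in> B")
  case True
  then show ?thesis using that reachable_in_refl[OF x] gdist_self[OF x] by simp
next
  case False
  obtain p where p: "p \<in> B" "d x p = dist_B x" by (rule dist_B_attained)
  have "C \<subseteq> V" using C by (auto simp: component_of_def)
  then obtain xs where xs: "walk_in V E xs" "hd xs = x" "last xs = p" "length xs = Suc (dist_B x)"
    using reachable_V x p B_subset gdist_shortest_walk by (metis Un_iff subsetD)
  have "xs ! i \<notin> B" if "Suc i < length xs" for i
    using dist_B_le[of "xs ! i" x] gdist_hd_nth_le[OF xs(1), of i] xs(2,4) that by fastforce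
  then have "set xs \<subseteq> C \<union> B" using walk_stays_in_component[OF C xs(1)] xs(2) x False by blast
  with xs(1) have "walk_in (C \<union> B) E xs" by (rule walk_in_mono)
  then show ?thesis
    using that[OF p(1)] reachable_in_walk gdist_le_walk xs by fastforce
qed

lemma component_union_B_subset: "component C \<Longrightarrow> C \<union> B \<subseteq> V"
  using B_subset by (auto simp: component_of_def)

lemma reachable_within_component:
  assumes C: "component C" and "x \<in> C \<union> B" "y \<in> C \<union> B"
  shows "reachable_in (C \<union> B) E x y"
proof -
  obtain p where "p \<in> B" "reachable_in (C \<union> B) E x p"
    using nearest_B_within_component[OF C \<open>x \<in> C \<union> B\<close>] by blast
  moreover obtain q where "q \<in> B" "reachable_in (C \<union> B) E y q"
    using nearest_B_within_component[OF C \<open>y \<in> C \<union> B\<close>] by blast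
  ultimately show ?thesis using gdist_via_B(1)[of "C \<union> B"] by blast
qed

lemma d_le_gdist_component:
  "component C \<Longrightarrow> x \<in> C \<union> B \<Longrightarrow> y \<in> C \<union> B \<Longrightarrow> d x y \<le> gdist (C \<union> B) E x y"
  using gdist_antimono[OF reachable_within_component component_union_B_subset] by blast

lemma gdist_component_le_dist_B:
  assumes C: "component C" and "x \<in> C \<union> B" "y \<in> C \<union> B"
  shows "gdist (C \<union> B) E x y \<le> dist_B x + dist_B y + k"
proof -
  obtain p where "p \<in> B" "reachable_in (C \<union> B) E x p" "gdist (C \<union> B) E x p \<le> dist_B x"
    using nearest_B_within_component[OF C \<open>x \<in> C \<union> B\<close>] by blast
  moreover obtain q where "q \<in> B" "reachable_in (C \<union> B) E y q" "gdist (C \<union> B) E y q \<le> dist_B y"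
    using nearest_B_within_component[OF C \<open>y \<in> C \<union> B\<close>] by blast
  ultimately show ?thesis using gdist_via_B(2)[of "C \<union> B" x p y q] by fastforce
qed

text \<open>A shortest path of \<open>G\<close> between two vertices of \<open>C \<union> B\<close> either runs inside \<open>C\<close>
  or passes through \<open>B\<close>.\<close>
lemma gdist_component_eq_or_dist_B_le:
  assumes C: "component C" and x: "x \<in> C \<union> B" and y: "y \<in> C \<union> B"
  shows "gdist (C \<union> B) E x y = d x y \<or> dist_B x + dist_B y \<le> d x y"
proof -
  have "x \<in> V" "y \<in> V" using component_union_B_subset[OF C] x y by auto
  then consider "dist_B x + dist_B y \<le> d x y"
    | xs where "walk_in (V - B) E xs" "hd xs = x" "last xs = y" "length xs = Suc (d x y)"
    using shortest_walk_meets_B_or_avoids_B by blast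
  then show ?thesis
  proof cases
    case (2 xs)
    then have "x \<in> V - B" using hd_in_set[of xs] by (auto simp: walk_in_def)
    then have "x \<in> C" using x by blast
    have "set xs \<subseteq> C"
    proof
      fix w assume "w \<in> set xs"
      then obtain i where i: "i < length xs" "w = xs ! i" by (auto simp: in_set_conv_nth)
      have "reachable_in (V - B) E x w" using reachable_in_hd_nth[OF 2(1) i(1)] 2(2) i(2) by simp
      then show "w \<in> C" by (rule component_reachable_closed[OF C \<open>x \<in> C\<close>])
    qed
    then have "walk_in (C \<union> B) E xs" using walk_in_mono[OF 2(1)] by blast
    then have "gdist (C \<union> B) E x y \<le> d x y" using gdist_le_walk 2 by fastforce
    then show ?thesis using d_le_gdist_component[OF C x y] by simp
  qed simp
qed

lemma gdist_component_le_d_add: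
  "component C \<Longrightarrow> x \<in> C \<union> B \<Longrightarrow> y \<in> C \<union> B \<Longrightarrow> gdist (C \<union> B) E x y \<le> d x y + k"
  using gdist_component_eq_or_dist_B_le gdist_component_le_dist_B by fastforce

lemma four_point_ineq_within_component:
  assumes C: "component C" and F: "four_point_cond (C \<union> B) E \<delta>"
    and abce: "a \<in> C \<union> B" "b \<in> C \<union> B" "c \<in> C \<union> B" "e \<in> C \<union> B"
  shows "four_point_ineq d (real k + \<delta>) a b c e"
proof -
  let ?g = "gdist (C \<union> B) E"
  have bounds: "real (d x y) \<le> real (?g x y)" "real (?g x y) \<le> real (d x y) + real k"
    if "x \<in> C \<union> B" "y \<in> C \<union> B" for x y
    using d_le_gdist_component[OF C that] gdist_component_le_d_add[OF C that] by simp_all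
  have "four_point_ineq ?g \<delta> a b c e" using F abce by (simp add: four_point_cond_iff)
  then show ?thesis
    using bounds[OF abce(1,2)] bounds[OF abce(3,4)] bounds[OF abce(1,3)] bounds[OF abce(2,4)]
      bounds[OF abce(1,4)] bounds[OF abce(2,3)]
    unfolding four_point_ineq_def by (smt (verit))
qed

lemma three_point_bound:
  assumes C: "component C" and F: "four_point_cond (C \<union> B) E \<delta>"
    and x: "x \<in> C \<union> B" and y: "y \<in> C \<union> B" and z: "z \<in> C \<union> B"
  shows "real (d x y) + real (dist_B z)
    \<le> max (real (d x z) + real (dist_B y)) (real (d y z) + real (dist_B x)) + real k + 2 * \<delta>"
proof -
  have "0 \<le> \<delta>" using F by (simp add: four_point_cond_def)
  have "d x y \<le> dist_B x + dist_B y + k"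
    using d_le_dist_B component_union_B_subset[OF C] x y by blast
  then have xy: "real (d x y) \<le> real (dist_B x) + real (dist_B y) + real k" by linarith
  consider "dist_B x + dist_B z \<le> d x z" | "dist_B y + dist_B z \<le> d y z"
    | "gdist (C \<union> B) E x z = d x z" "gdist (C \<union> B) E y z = d y z"
    using gdist_component_eq_or_dist_B_le[OF C x z] gdist_component_eq_or_dist_B_le[OF C y z] by blast
  then show ?thesis
  proof cases
    case 1
    then show ?thesis using xy \<open>0 \<le> \<delta>\<close> by linarith
  next
    case 2
    then show ?thesis using xy \<open>0 \<le> \<delta>\<close> by linarith
  next
    case 3
    obtain p where p: "p \<in> B" by (rule dist_B_attained)
    then have "four_point_ineq (gdist (C \<union> B) E) \<delta> x y z p"
      using F x y z by (simp add: four_point_cond_iff)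
    moreover have "d x y \<le> gdist (C \<union> B) E x y" using d_le_gdist_component[OF C x y] .
    moreover have "dist_B z \<le> gdist (C \<union> B) E z p"
      using dist_B_le[OF p, of z] d_le_gdist_component[OF C z, of p] p by simp
    moreover have "gdist (C \<union> B) E y p \<le> dist_B y + k" "gdist (C \<union> B) E x p \<le> dist_B x + k"
      using gdist_component_le_dist_B[OF C _ , of _ p] dist_B_zero[OF p] x y p by fastforce+
    ultimately show ?thesis using 3 unfolding four_point_ineq_def by (smt (verit) of_nat_add of_nat_mono)
  qed
qed

lemma four_point_ineq_three_within_component:
  assumes C: "component C" and F: "four_point_cond (C \<union> B) E \<delta>"
    and x: "x \<in> C \<union> B" and y: "y \<in> C \<union> B" and z: "z \<in> C \<union> B" and w: "w \<in> V"
  shows "four_point_ineq d (real k + \<delta>) x y z w"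
proof (cases "w \<in> C \<union> B")
  case True
  then show ?thesis using four_point_ineq_within_component[OF C F x y z] by blast
next
  case False
  have CB: "C \<union> B \<subseteq> V" by (rule component_union_B_subset[OF C])
  have sep: "dist_B t + dist_B w \<le> d t w" if "t \<in> C \<union> B" for t
    using dist_B_add_le_if_not_reachable[OF _ w not_reachable_outside_component[OF C that False]]
      CB that by blast
  have "d z w \<le> dist_B z + dist_B w + k" using d_le_dist_B[OF _ w] CB z by blast
  then have "real (d z w) \<le> real (dist_B z) + real (dist_B w) + real k"
    and "real (dist_B x) + real (dist_B w) \<le> real (d x w)"
    and "real (dist_B y) + real (dist_B w) \<le> real (d y w)"
    using sep[OF x] sep[OF y] by linarith+
  then show ?thesis
    using three_point_bound[OF C F x y z] unfolding four_point_ineq_def by (smt (verit))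
qed

lemma component_at_memI:
  assumes "reachable_in (V - B) E u v"
  shows "component (component_at u)" "u \<in> component_at u" "v \<in> component_at u"
proof -
  have "u \<in> V - B" using reachable_in_memD[OF assms] ..
  then show "component (component_at u)" "u \<in> component_at u"
    using component_component_at reachable_in_refl[of u "V - B" E] by (auto simp: component_at_def)
  show "v \<in> component_at u" using assms by (simp add: component_at_def)
qed

lemma four_point_ineq_if_pairing_separated:
  assumes "0 \<le> \<delta>" and V: "a \<in> V" "b \<in> V" "c \<in> V" "e \<in> V"
    and "\<not> reachable_in (V - B) E a c" "\<not> reachable_in (V - B) E b e"
  shows "four_point_ineq d (real k + \<delta>) a b c e"
proof -
  have "dist_B a + dist_B c + (dist_B b + dist_B e) \<le> d a c + d b e"
    using dist_B_add_le_if_not_reachable[OF V(1,3) assms(6)]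
      dist_B_add_le_if_not_reachable[OF V(2,4) assms(7)] by (rule add_mono)
  moreover have "d a b + d c e \<le> dist_B a + dist_B b + k + (dist_B c + dist_B e + k)"
    using d_le_dist_B[OF V(1,2)] d_le_dist_B[OF V(3,4)] by (rule add_mono)
  ultimately have "real (d a b) + real (d c e) \<le> real (d a c) + real (d b e) + 2 * real k"
    by linarith
  then show ?thesis using \<open>0 \<le> \<delta>\<close> unfolding four_point_ineq_def by (smt (verit))
qed

lemma four_point_ineq_all:
  assumes F: "\<And>C. component C \<Longrightarrow> four_point_cond (C \<union> B) E \<delta>" and "0 \<le> \<delta>"
    and V: "a \<in> V" "b \<in> V" "c \<in> V" "e \<in> V"
  shows "four_point_ineq d (real k + \<delta>) a b c e"
proof -
  let ?R = "reachable_in (V - B) E"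
  have three: "four_point_ineq d (real k + \<delta>) x y z w"
    if "component C" "x \<in> C" "y \<in> C" "z \<in> C" "w \<in> V" for C x y z w
    using that by (intro four_point_ineq_three_within_component[OF that(1) F[OF that(1)]]) auto
  show ?thesis
  proof (cases "(?R a c \<or> ?R b e) \<and> (?R a e \<or> ?R b c)")
    case False
    then consider "\<not> ?R a c" "\<not> ?R b e" | "\<not> ?R a e" "\<not> ?R b c" by blast
    then show ?thesis
    proof cases
      case 1
      then show ?thesis using four_point_ineq_if_pairing_separated[OF \<open>0 \<le> \<delta>\<close> V] by blast
    next
      case 2
      then have "four_point_ineq d (real k + \<delta>) a b e c"
        using four_point_ineq_if_pairing_separated[OF \<open>0 \<le> \<delta>\<close> V(1,2,4,3)] by blast
      then show ?thesis by (rule four_point_ineq_swap_right[OF d_commute])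
    qed
  next
    case True
    then consider "?R a c" "?R a e" | "?R a c" "?R b c" | "?R b e" "?R a e" | "?R b e" "?R b c"
      by blast
    then show ?thesis
    proof cases
      case 1
      note C = component_at_memI[OF 1(1)] and e = component_at_memI(3)[OF 1(2)]
      have "four_point_ineq d (real k + \<delta>) c e a b" using three[OF C(1,3) e C(2) V(2)] .
      then show ?thesis by (rule four_point_ineq_swap_pairs[OF d_commute])
    next
      case 2
      note C = component_at_memI[OF reachable_in_commute[OF 2(2)]]
        and a = component_at_memI(3)[OF reachable_in_commute[OF 2(1)]]
      show ?thesis using three[OF C(1) a C(3,2) V(4)] .
    next
      case 3
      note C = component_at_memI[OF reachable_in_commute[OF 3(1)]]
        and a = component_at_memI(3)[OF reachable_in_commute[OF 3(2)]]
      have "four_point_ineq d (real k + \<delta>) a b e c" using three[OF C(1) a C(3,2) V(3)] .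
      then show ?thesis by (rule four_point_ineq_swap_right[OF d_commute])
    next
      case 4
      note C = component_at_memI[OF 4(1)] and c = component_at_memI(3)[OF 4(2)]
      have "four_point_ineq d (real k + \<delta>) c e b a" using three[OF C(1) c C(3,2) V(1)] .
      then show ?thesis
        by (rule four_point_ineq_swap_pairs[OF d_commute, OF four_point_ineq_swap_right[OF d_commute]])
    qed
  qed
qed

lemma hyp_curv_le_add_Max:
  assumes "V - B \<noteq> {}"
  shows "hyp_curv V E \<le> real k + Max {hyp_curv (C \<union> B) E | C. component C}"
proof -
  let ?H = "{hyp_curv (C \<union> B) E | C. component C}"
  have "{C. component C} \<subseteq> Pow V" by (auto simp: component_of_def)
  then have "finite {C. component C}" using finite_V by (meson finite_Pow_iff finite_subset)
  then have "finite ?H" by (simp add: setcompr_eq_image)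
  have F: "four_point_cond (C \<union> B) E (Max ?H)" if C: "component C" for C
  proof -
    have "finite (C \<union> B)" using component_union_B_subset[OF C] finite_V by (rule finite_subset)
    moreover have "hyp_curv (C \<union> B) E \<le> Max ?H" using \<open>finite ?H\<close> C by (intro Max_ge) auto
    ultimately show ?thesis by (simp add: four_point_cond_iff_hyp_curv_le)
  qed
  obtain x where "x \<in> V - B" using assms by blast
  then have "0 \<le> Max ?H"
    using F[OF component_component_at] four_point_cond_def by blast
  then have "four_point_cond V E (real k + Max ?H)"
    using four_point_ineq_all[OF F] by (simp add: four_point_cond_iff)
  then show ?thesis using finite_V by (simp add: four_point_cond_iff_hyp_curv_le)
qed

end

theorem mainTheorem4:
  fixes V B :: "'a set" and E :: "'a \<Rightarrow> 'a \<Rightarrow> bool" and k :: nat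
  assumes "finite V"
    and "\<And>u v. E u v \<Longrightarrow> E v u"
    and "\<And>u. \<not> E u u"
    and "\<And>u v. E u v \<Longrightarrow> u \<in> V \<and> v \<in> V"
    and "connected_in V E"
    and "B \<subseteq> V"
    and "\<not> connected_in (V - B) E"
    and "V - B \<noteq> {}"
    and "connected_in B E"
    and "diameter B E = k"
  shows "hyp_curv V E \<le> real k + Max {hyp_curv (C \<union> B) E | C. component_of (V - B) E C}"
proof -
  interpret graph_separator V B E k
  proof
    show "gdist B E p q \<le> k" if "p \<in> B" "q \<in> B" for p q
      using gdist_le_diameter[OF finite_subset[OF assms(6,1)] that, of E] assms(10) by simp
  qed (use assms in auto)
  show ?thesis using assms(8) by (rule hyp_curv_le_add_Max)
qed

end
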